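(* Let $\alpha<0<\beta$ and $\theta^*=\beta/(\beta-\alpha)\in(0,1)$. Then for every $\theta\in[0,1]$ with $\theta\neq\theta^*$, $E_{\theta^*}\succ E_\theta$; that is, with $\theta_1=\theta$ and $\theta_2=\theta^*$, for every $p^0\in L^1([0,1])$ with $p^0\ge0$ and $\int_0^1p^0\,dx=1$, \[ \pi_1[p^0]<\int_0^1x\,p^0(x)\,dx . \]
   Context: An $E_\theta$-strategist ($\theta\in[0,1]$) plays pure strategy I with probability $\theta$ and pure strategy II with probability $1-\theta$ in a two-strategy game (Moran process) between $E_{\theta_1}$ and $E_{\theta_2}$ strategists, with payoffs scaled as $(A,B,C,D)=(1,1,1,1)+\frac1N(a,b,c,d)+o(1/N)$ and $\alpha=a-c$, $\beta=b-d$. In the associated large-population (thermodynamical) limit, with $x$ the fraction of $E_{\theta_1}$ strategists and $p^0$ the initial density of $x$, the fixation probability of the $E_{\theta_1}$ type is \[ \pi_1[p^0]=\frac{\int_0^1p^0(x)\int_0^xF_{(\theta_1,\theta_2)}(y)\,dy\,dx}{\int_0^1F_{(\theta_1,\theta_2)}(y)\,dy},\qquad F_{(\theta_1,\theta_2)}(y)=\exp\!\Big(-y^2(\theta_1-\theta_2)^2\tfrac{\alpha-\beta}{2}-y(\theta_1-\theta_2)\big(\theta_2\alpha+(1-\theta_2)\beta\big)\Big). \] In the neutral case $\theta_1=\theta_2$ this equals $\pi_1^{\rm N}[p^0]=\int_0^1xp^0(x)\,dx$. Definition: $E_{\theta_2}\succ E_{\theta_1}$ ($E_{\theta_2}$ dominates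 $E_{\theta_1}$) if for every nontrivial initial condition $p^0$ the fixation probability $\pi_1[p^0]$ of the $E_{\theta_1}$ type is strictly smaller than the neutral value $\int_0^1xp^0(x)\,dx$. *)

theory Defs
  imports "HOL-Analysis.Analysis"
begin

text \<open>The weight function F_(theta1,theta2)(y), with alpha = a - c, beta = b - d.\<close>
definition Fw :: "real \<Rightarrow> real \<Rightarrow> real \<Rightarrow> real \<Rightarrow> real \<Rightarrow> real" where
  "Fw \<alpha> \<beta> \<theta>1 \<theta>2 y =
     exp (- (y\<^sup>2 * (\<theta>1 - \<theta>2)\<^sup>2 * ((\<alpha> - \<beta>) / 2))
          - y * (\<theta>1 - \<theta>2) * (\<theta>2 * \<alpha> + (1 - \<theta>2) * \<beta>))"

text \<open>Fixation probability pi_1[p0] of the E_theta1 type in the thermodynamical limit.\<close>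
definition fixprob1 :: "real \<Rightarrow> real \<Rightarrow> real \<Rightarrow> real \<Rightarrow> (real \<Rightarrow> real) \<Rightarrow> real" where
  "fixprob1 \<alpha> \<beta> \<theta>1 \<theta>2 p0 =
     (LBINT x:{0..1}. p0 x * (LBINT y:{0..x}. Fw \<alpha> \<beta> \<theta>1 \<theta>2 y))
     / (LBINT y:{0..1}. Fw \<alpha> \<beta> \<theta>1 \<theta>2 y)"

definition neutral_fixprob :: "(real \<Rightarrow> real) \<Rightarrow> real" where
  "neutral_fixprob p0 = (LBINT x:{0..1}. x * p0 x)"

end

theory Submission
  imports Defs
begin

text \<open>At \<open>\<theta>\<^sub>2 = \<theta>\<^sup>* = \<beta>/(\<beta> - \<alpha>)\<close> the linear part of the exponent of \<open>F\<close>
  vanishes, since \<open>\<theta>\<^sup>*\<alpha> + (1 - \<theta>\<^sup>*)\<beta> = 0\<close>, so \<open>F(y) = exp (c y\<^sup>2)\<close> with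
  \<open>c = (\<theta> - \<theta>\<^sup>*)\<^sup>2(\<beta> - \<alpha>)/2 > 0\<close>. Hence \<open>F\<close> is strictly increasing on \<open>[0,1]\<close>, so its
  primitive \<open>I(x) = \<integral>\<^sub>0\<^sup>x F\<close> is strictly convex and lies strictly below its chord:
  \<open>I(x) < x I(1)\<close> for \<open>0 < x < 1\<close>. Integrating \<open>x - I(x)/I(1) > 0\<close> against a
  probability density \<open>p\<^sup>0\<close> gives \<open>\<pi>\<^sub>1[p\<^sup>0] < \<integral> x p\<^sup>0(x) dx\<close>.\<close>

lemma set_integrable_mult_continuous:
  fixes p g :: "'a::euclidean_space \<Rightarrow> real"
  assumes p: "set_integrable lborel S p" and g: "continuous_on S g" and S: "compact S"
  shows "set_integrable lborel S (\<lambda>x. p x * g x)"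
proof -
  obtain B where B: "\<And>x. x \<in> S \<Longrightarrow> \<bar>g x\<bar> \<le> B"
    using compact_imp_bounded[OF compact_continuous_image[OF g S]] by (auto simp: bounded_real)
  have "(\<lambda>x. indicator S x *\<^sub>R p x) \<in> borel_measurable lborel"
    using p unfolding set_integrable_def by (rule borel_measurable_integrable)
  moreover have "(\<lambda>x. indicator S x *\<^sub>R g x) \<in> borel_measurable lborel"
    using borel_measurable_continuous_on_indicator[OF _ g] S by (simp add: borel_compact)
  ultimately have "(\<lambda>x. (indicator S x *\<^sub>R p x) * (indicator S x *\<^sub>R g x)) \<in> borel_measurable lborel"
    by (intro borel_measurable_times)
  moreover have "(\<lambda>x. (indicator S x *\<^sub>R p x) * (indicator S x *\<^sub>R g x)) =
      (\<lambda>x. indicator S x *\<^sub>R (p x * g x))"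
    by (auto simp: indicator_def)
  ultimately have meas: "set_borel_measurable lborel S (\<lambda>x. p x * g x)"
    unfolding set_borel_measurable_def by simp
  have bound: "AE x in lborel. x \<in> S \<longrightarrow> norm (p x * g x) \<le> norm (B * p x)"
  proof (intro AE_I2 impI)
    fix x assume "x \<in> S"
    have "\<bar>g x\<bar> * \<bar>p x\<bar> \<le> \<bar>B\<bar> * \<bar>p x\<bar>"
      using B[OF \<open>x \<in> S\<close>] by (intro mult_right_mono) auto
    then show "norm (p x * g x) \<le> norm (B * p x)"
      by (simp add: abs_mult mult.commute)
  qed
  have "set_integrable lborel S (\<lambda>x. B * p x)"
    using p by simp
  then show ?thesis
    using meas bound by (rule set_integrable_bound)
qed

lemma set_integral_mult_pos:
  fixes p g :: "'a \<Rightarrow> real"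
  assumes int: "set_integrable M S (\<lambda>x. p x * g x)"
    and p_nonneg: "AE x in M. x \<in> S \<longrightarrow> 0 \<le> p x"
    and g_pos: "AE x in M. x \<in> S \<longrightarrow> 0 < g x"
    and p_nonzero: "(LINT x:S|M. p x) \<noteq> 0"
  shows "0 < (LINT x:S|M. p x * g x)"
proof -
  define h where "h = (\<lambda>x. indicator S x *\<^sub>R (p x * g x))"
  have h_nonneg: "AE x in M. 0 \<le> h x"
    using p_nonneg g_pos by eventually_elim (auto simp: h_def split: split_indicator)
  have h_int: "integrable M h"
    using int by (simp add: h_def set_integrable_def)
  have "integral\<^sup>L M h \<noteq> 0"
  proof
    assume "integral\<^sup>L M h = 0"
    then have "AE x in M. h x = 0"
      using integral_nonneg_eq_0_iff_AE[OF h_int h_nonneg] by simp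
    then have "AE x in M. indicator S x *\<^sub>R p x = 0"
      using g_pos by eventually_elim (auto simp: h_def split: split_indicator)
    then show False
      using p_nonzero by (simp add: set_lebesgue_integral_def integral_eq_zero_AE)
  qed
  with integral_nonneg_AE[OF h_nonneg] show ?thesis
    by (simp add: h_def set_lebesgue_integral_def)
qed

lemma integral_strict_mono_on_less_chord:
  fixes F :: "real \<Rightarrow> real"
  assumes cont: "continuous_on {0..1} F" and mono: "strict_mono_on {0..1} F"
    and x: "0 < x" "x < 1"
  shows "integral {0..x} F < x * integral {0..1} F"
proof -
  have cont_sub: "continuous_on {a..b} F" if "0 \<le> a" "b \<le> 1" for a b
    using cont by (rule continuous_on_subset) (use that in auto)
  have "integral {0..x} F < integral {0..x} (\<lambda>_. F x)"
    using x by (intro integral_less_real cont_sub strict_mono_onD[OF mono]) auto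
  then have below: "integral {0..x} F < x * F x"
    using x by simp
  have "integral {x..1} (\<lambda>_. F x) \<le> integral {x..1} F"
    using x mono by (intro integral_le integrable_continuous_interval cont_sub)
      (auto intro: strict_mono_on_leD)
  then have above: "(1 - x) * F x \<le> integral {x..1} F"
    using x by simp
  have split: "integral {0..x} F + integral {x..1} F = integral {0..1} F"
    using x by (intro Henstock_Kurzweil_Integration.integral_combine integrable_continuous_interval cont) auto
  have "(1 - x) * integral {0..x} F < x * ((1 - x) * F x)"
    using mult_strict_left_mono[OF below, of "1 - x"] x by (simp add: algebra_simps)
  also have "\<dots> \<le> x * integral {x..1} F"
    using above x by (simp add: mult_left_mono)
  finally show ?thesis
    by (simp flip: split add: algebra_simps)
qed

lemma integral_strict_mono_on_pos:
  fixes F :: "real \<Rightarrow> real"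
  assumes cont: "continuous_on {0..1} F" and mono: "strict_mono_on {0..1} F" and F0: "0 \<le> F 0"
  shows "0 < integral {0..1} F"
proof -
  have "integral {0..1} (\<lambda>_::real. F 0) < integral {0..1} F"
    using cont by (intro integral_less_real) (auto intro: strict_mono_onD[OF mono])
  then show ?thesis
    using F0 by simp
qed

lemma weighted_primitive_ratio_less_mean:
  fixes F p :: "real \<Rightarrow> real"
  assumes cont: "continuous_on {0..1} F" and mono: "strict_mono_on {0..1} F" and F0: "0 \<le> F 0"
    and p: "set_integrable lborel {0..1} p"
    and p_nonneg: "AE x in lborel. x \<in> {0..1} \<longrightarrow> 0 \<le> p x"
    and p_nonzero: "(LBINT x:{0..1}. p x) \<noteq> 0"
  shows "(LBINT x:{0..1}. p x * (LBINT y:{0..x}. F y)) / (LBINT y:{0..1}. F y)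
           < (LBINT x:{0..1}. x * p x)"
proof -
  define I where "I = (\<lambda>x. integral {0..x} F)"
  have cont_sub: "continuous_on {0..x} F" if "x \<le> 1" for x
    using cont by (rule continuous_on_subset) (use that in auto)
  have LBINT_I: "(LBINT y:{0..x}. F y) = I x" if "x \<le> 1" for x
    unfolding I_def using borel_integrable_atLeastAtMost'[OF cont_sub[OF that]]
    by (rule set_borel_integral_eq_integral(2))
  have I_cont: "continuous_on {0..1} I"
    unfolding I_def using cont by (intro indefinite_integral_continuous_1 integrable_continuous_interval)
  have I1_pos: "0 < I 1"
    unfolding I_def using cont mono F0 by (rule integral_strict_mono_on_pos)
  define g where "g = (\<lambda>x. x - I x / I 1)"
  have g_pos: "AE x in lborel. x \<in> {0..1} \<longrightarrow> 0 < g x"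
    using AE_lborel_singleton[of 0] AE_lborel_singleton[of 1]
  proof eventually_elim
    case (elim x)
    show ?case
    proof
      assume "x \<in> {0..1}"
      with elim have "I x < x * I 1"
        unfolding I_def by (intro integral_strict_mono_on_less_chord[OF cont mono]) auto
      then show "0 < g x"
        using I1_pos by (simp add: g_def divide_less_eq)
    qed
  qed
  have int_pI: "set_integrable lborel {0..1} (\<lambda>x. p x * I x)"
    using p I_cont by (rule set_integrable_mult_continuous) simp
  have int_px: "set_integrable lborel {0..1} (\<lambda>x. p x * x)"
    using p by (rule set_integrable_mult_continuous) (auto intro: continuous_intros)
  have "continuous_on {0..1} g"
    unfolding g_def using I_cont I1_pos by (intro continuous_intros) auto
  with p have "set_integrable lborel {0..1} (\<lambda>x. p x * g x)"
    by (rule set_integrable_mult_continuous) simp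
  then have "0 < (LBINT x:{0..1}. p x * g x)"
    using p_nonneg g_pos p_nonzero by (rule set_integral_mult_pos)
  also have "(LBINT x:{0..1}. p x * g x)
      = (LBINT x:{0..1}. x * p x) - (LBINT x:{0..1}. p x * I x) / I 1"
  proof -
    have "(LBINT x:{0..1}. p x * g x) = (LBINT x:{0..1}. p x * x - p x * I x / I 1)"
      by (simp add: g_def algebra_simps)
    also have "\<dots> = (LBINT x:{0..1}. p x * x) - (LBINT x:{0..1}. p x * I x) / I 1"
      using int_px int_pI by (simp add: set_integral_diff set_integral_divide_zero)
    finally show ?thesis
      by (simp add: mult.commute)
  qed
  moreover have "(LBINT x:{0..1}. p x * (LBINT y:{0..x}. F y)) = (LBINT x:{0..1}. p x * I x)"
    by (rule set_lebesgue_integral_cong) (auto simp: LBINT_I)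
  ultimately show ?thesis
    by (simp add: LBINT_I)
qed

lemma Fw_at_threshold:
  assumes "\<alpha> \<noteq> \<beta>"
  shows "Fw \<alpha> \<beta> \<theta> (\<beta> / (\<beta> - \<alpha>)) y
           = exp ((\<theta> - \<beta> / (\<beta> - \<alpha>))\<^sup>2 * (\<beta> - \<alpha>) / 2 * y\<^sup>2)"
proof -
  have linear_part: "\<beta> / (\<beta> - \<alpha>) * \<alpha> + (1 - \<beta> / (\<beta> - \<alpha>)) * \<beta> = 0"
    using assms by (simp add: field_simps)
  show ?thesis
    unfolding Fw_def linear_part by (simp add: field_simps)
qed

theorem mainTheorem6:
  fixes \<alpha> \<beta> \<theta> :: real and p0 :: "real \<Rightarrow> real"
  assumes "\<alpha> < 0" and "0 < \<beta>"
    and "\<theta> \<in> {0..1}" and "\<theta> \<noteq> \<beta> / (\<beta> - \<alpha>)"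
    and "set_integrable lborel {0..1} p0"
    and "AE x in lborel. x \<in> {0..1} \<longrightarrow> 0 \<le> p0 x"
    and "(LBINT x:{0..1}. p0 x) = 1"
  shows "fixprob1 \<alpha> \<beta> \<theta> (\<beta> / (\<beta> - \<alpha>)) p0 < neutral_fixprob p0"
proof -
  define c where "c = (\<theta> - \<beta> / (\<beta> - \<alpha>))\<^sup>2 * (\<beta> - \<alpha>) / 2"
  have "0 < c"
    using assms(1,2,4) by (simp add: c_def)
  have Fw_eq: "Fw \<alpha> \<beta> \<theta> (\<beta> / (\<beta> - \<alpha>)) = (\<lambda>y. exp (c * y\<^sup>2))"
    using assms(1,2) by (intro ext) (simp add: Fw_at_threshold c_def)
  have "strict_mono_on {0..1} (\<lambda>y. exp (c * y\<^sup>2))"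
    using \<open>0 < c\<close> by (intro strict_mono_onI) (simp add: power_strict_mono)
  then show ?thesis
    unfolding fixprob1_def neutral_fixprob_def Fw_eq using assms(5-7)
    by (intro weighted_primitive_ratio_less_mean continuous_intros) auto
qed

end
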